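(* Let $(H,\alpha)$ be a monoidal Hom-bialgebra, let $(A,\beta)$ be a left $(H,\alpha)$-Hom-comodule coalgebra with coaction $a\mapsto a_{(-1)}\otimes a_{(0)}$, and let $m\in\mathbb{Z}$. On $A\rtimes H:=A\otimes H$ define $$\varepsilon_{A\rtimes H}(a\rtimes h)=\varepsilon(a)\varepsilon(h),\qquad \Delta_{A\rtimes H}(a\rtimes h)=a_{1}\rtimes\alpha^{m}(a_{2(-1)})\alpha^{-1}(h_{1})\otimes\beta(a_{2(0)})\rtimes h_{2}.$$ Then $(A\rtimes H,\beta\otimes\alpha)$ with $\Delta_{A\rtimes H}$ and $\varepsilon_{A\rtimes H}$ is a monoidal Hom-coalgebra.
   Context: All vector spaces are over a field $k$; Sweedler notation $\Delta(c)=c_1\otimes c_2$. A monoidal Hom-algebra $(A,\beta)$: multiplication, unit $1_A$, linear automorphism $\beta$ with $\beta(a)(bc)=(ab)\beta(c)$, $\beta(ab)=\beta(a)\beta(b)$, $a1_A=1_Aa=\beta(a)$, $\beta(1_A)=1_A$. A monoidal Hom-coalgebra $(C,\gamma)$: $\Delta$, $\varepsilon$, linear automorphism $\gamma$ with $\gamma^{-1}(c_1)\otimes\Delta(c_2)=\Delta(c_1)\otimes\gamma^{-1}(c_2)$, $\Delta(\gamma(c))=\gamma(c_1)\otimes\gamma(c_2)$, $c_1\varepsilon(c_2)=\gamma^{-1}(c)=\varepsilon(c_1)c_2$, $\varepsilon\circ\gamma=\varepsilon$. A monoidal Hom-bialgebra $(H,\alpha)$ is both (with the same $\alpha$) with $\Delta,\varepsilon$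 multiplicative and unital. A left $(H,\alpha)$-Hom-comodule is $(M,\mu)$, $\mu$ a linear automorphism, with $\rho(x)=x_{(-1)}\otimes x_{(0)}$ satisfying $\Delta_H(x_{(-1)})\otimes\mu^{-1}(x_{(0)})=\alpha^{-1}(x_{(-1)})\otimes x_{(0)(-1)}\otimes x_{(0)(0)}$, $\rho(\mu(x))=\alpha(x_{(-1)})\otimes\mu(x_{(0)})$, $\varepsilon_H(x_{(-1)})x_{(0)}=\mu^{-1}(x)$. A left $(H,\alpha)$-Hom-comodule coalgebra is a monoidal Hom-coalgebra $(A,\beta)$ which is a left $(H,\alpha)$-Hom-comodule such that $b_{(-1)}\otimes b_{(0)1}\otimes b_{(0)2}=b_{1(-1)}b_{2(-1)}\otimes b_{1(0)}\otimes b_{2(0)}$ and $\varepsilon(b_{(0)})b_{(-1)}=\varepsilon(b)1_H$. *)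

theory Defs
  imports "HOL-Library.Poly_Mapping"
begin

text \<open>Vector spaces over a field 'k are modelled via a chosen basis: a space with
basis indexed by the type 'a is the space of finitely supported functions 'a =>0 'k.
The tensor product of spaces with bases 'a and 'b is the space with basis 'a * 'b.\<close>

definition pm_scale :: "'k::field \<Rightarrow> ('a \<Rightarrow>\<^sub>0 'k) \<Rightarrow> ('a \<Rightarrow>\<^sub>0 'k)" where
  "pm_scale c v = Poly_Mapping.map (\<lambda>x. c * x) v"

definition bv :: "'a \<Rightarrow> ('a \<Rightarrow>\<^sub>0 'k::field)" where
  "bv x = Poly_Mapping.single x 1"

definition lin :: "('a \<Rightarrow> ('b \<Rightarrow>\<^sub>0 'k::field)) \<Rightarrow> ('a \<Rightarrow>\<^sub>0 'k) \<Rightarrow> ('b \<Rightarrow>\<^sub>0 'k)" where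
  "lin f v = (\<Sum>x\<in>Poly_Mapping.keys v. pm_scale (Poly_Mapping.lookup v x) (f x))"

definition is_linear :: "(('a \<Rightarrow>\<^sub>0 'k::field) \<Rightarrow> ('b \<Rightarrow>\<^sub>0 'k)) \<Rightarrow> bool" where
  "is_linear f \<longleftrightarrow> (\<forall>u v. f (u + v) = f u + f v) \<and> (\<forall>c u. f (pm_scale c u) = pm_scale c (f u))"

definition is_linfun :: "(('a \<Rightarrow>\<^sub>0 'k::field) \<Rightarrow> 'k) \<Rightarrow> bool" where
  "is_linfun f \<longleftrightarrow> (\<forall>u v. f (u + v) = f u + f v) \<and> (\<forall>c u. f (pm_scale c u) = c * f u)"

definition lin_auto :: "(('a \<Rightarrow>\<^sub>0 'k::field) \<Rightarrow> ('a \<Rightarrow>\<^sub>0 'k)) \<Rightarrow> bool" where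
  "lin_auto f \<longleftrightarrow> is_linear f \<and> bij f"

definition hpow :: "(('a \<Rightarrow>\<^sub>0 'k::field) \<Rightarrow> ('a \<Rightarrow>\<^sub>0 'k)) \<Rightarrow> int \<Rightarrow> ('a \<Rightarrow>\<^sub>0 'k) \<Rightarrow> ('a \<Rightarrow>\<^sub>0 'k)" where
  "hpow f m = (if 0 \<le> m then f ^^ nat m else inv f ^^ nat (- m))"

definition tensor :: "('a \<Rightarrow>\<^sub>0 'k::field) \<Rightarrow> ('b \<Rightarrow>\<^sub>0 'k) \<Rightarrow> ('a \<times> 'b \<Rightarrow>\<^sub>0 'k)" where
  "tensor v w = lin (\<lambda>x. lin (\<lambda>y. bv (x, y)) w) v"

definition tmap :: "(('a \<Rightarrow>\<^sub>0 'k::field) \<Rightarrow> ('c \<Rightarrow>\<^sub>0 'k)) \<Rightarrow> (('b \<Rightarrow>\<^sub>0 'k) \<Rightarrow> ('d \<Rightarrow>\<^sub>0 'k))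
    \<Rightarrow> ('a \<times> 'b \<Rightarrow>\<^sub>0 'k) \<Rightarrow> ('c \<times> 'd \<Rightarrow>\<^sub>0 'k)" where
  "tmap f g = lin (\<lambda>(x, y). tensor (f (bv x)) (g (bv y)))"

definition assocl :: "('a \<times> ('b \<times> 'c) \<Rightarrow>\<^sub>0 'k::field) \<Rightarrow> (('a \<times> 'b) \<times> 'c \<Rightarrow>\<^sub>0 'k)" where
  "assocl = lin (\<lambda>(x, (y, z)). bv ((x, y), z))"

definition assocr :: "(('a \<times> 'b) \<times> 'c \<Rightarrow>\<^sub>0 'k::field) \<Rightarrow> ('a \<times> ('b \<times> 'c) \<Rightarrow>\<^sub>0 'k)" where
  "assocr = lin (\<lambda>((x, y), z). bv (x, (y, z)))"

definition midswap :: "(('a \<times> 'b) \<times> ('c \<times> 'd) \<Rightarrow>\<^sub>0 'k::field) \<Rightarrow> (('a \<times> 'c) \<times> ('b \<times> 'd) \<Rightarrow>\<^sub>0 'k)" where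
  "midswap = lin (\<lambda>((a, b), (c, d)). bv ((a, c), (b, d)))"

definition epsl :: "(('a \<Rightarrow>\<^sub>0 'k::field) \<Rightarrow> 'k) \<Rightarrow> ('a \<times> 'b \<Rightarrow>\<^sub>0 'k) \<Rightarrow> ('b \<Rightarrow>\<^sub>0 'k)" where
  "epsl e = lin (\<lambda>(x, y). pm_scale (e (bv x)) (bv y))"

definition epsr :: "(('b \<Rightarrow>\<^sub>0 'k::field) \<Rightarrow> 'k) \<Rightarrow> ('a \<times> 'b \<Rightarrow>\<^sub>0 'k) \<Rightarrow> ('a \<Rightarrow>\<^sub>0 'k)" where
  "epsr e = lin (\<lambda>(x, y). pm_scale (e (bv y)) (bv x))"

definition hom_algebra ::
  "(('a \<times> 'a \<Rightarrow>\<^sub>0 'k::field) \<Rightarrow> ('a \<Rightarrow>\<^sub>0 'k)) \<Rightarrow> ('a \<Rightarrow>\<^sub>0 'k)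
   \<Rightarrow> (('a \<Rightarrow>\<^sub>0 'k) \<Rightarrow> ('a \<Rightarrow>\<^sub>0 'k)) \<Rightarrow> bool" where
  "hom_algebra mu u beta \<longleftrightarrow>
     is_linear mu \<and> lin_auto beta \<and>
     (\<forall>a b c. mu (tensor (beta a) (mu (tensor b c))) = mu (tensor (mu (tensor a b)) (beta c))) \<and>
     (\<forall>a b. beta (mu (tensor a b)) = mu (tensor (beta a) (beta b))) \<and>
     (\<forall>a. mu (tensor a u) = beta a \<and> mu (tensor u a) = beta a) \<and>
     beta u = u"

definition hom_coalgebra ::
  "(('a \<Rightarrow>\<^sub>0 'k::field) \<Rightarrow> ('a \<times> 'a \<Rightarrow>\<^sub>0 'k)) \<Rightarrow> (('a \<Rightarrow>\<^sub>0 'k) \<Rightarrow> 'k)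
   \<Rightarrow> (('a \<Rightarrow>\<^sub>0 'k) \<Rightarrow> ('a \<Rightarrow>\<^sub>0 'k)) \<Rightarrow> bool" where
  "hom_coalgebra delta eps gamma \<longleftrightarrow>
     is_linear delta \<and> is_linfun eps \<and> lin_auto gamma \<and>
     (\<forall>c. tmap (inv gamma) delta (delta c) = assocr (tmap delta (inv gamma) (delta c))) \<and>
     (\<forall>c. delta (gamma c) = tmap gamma gamma (delta c)) \<and>
     (\<forall>c. epsr eps (delta c) = inv gamma c \<and> epsl eps (delta c) = inv gamma c) \<and>
     (\<forall>c. eps (gamma c) = eps c)"

definition hom_bialgebra ::
  "(('h \<times> 'h \<Rightarrow>\<^sub>0 'k::field) \<Rightarrow> ('h \<Rightarrow>\<^sub>0 'k)) \<Rightarrow> ('h \<Rightarrow>\<^sub>0 'k)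
   \<Rightarrow> (('h \<Rightarrow>\<^sub>0 'k) \<Rightarrow> ('h \<times> 'h \<Rightarrow>\<^sub>0 'k)) \<Rightarrow> (('h \<Rightarrow>\<^sub>0 'k) \<Rightarrow> 'k)
   \<Rightarrow> (('h \<Rightarrow>\<^sub>0 'k) \<Rightarrow> ('h \<Rightarrow>\<^sub>0 'k)) \<Rightarrow> bool" where
  "hom_bialgebra mu u delta eps alpha \<longleftrightarrow>
     hom_algebra mu u alpha \<and> hom_coalgebra delta eps alpha \<and>
     (\<forall>g h. delta (mu (tensor g h)) = tmap mu mu (midswap (tensor (delta g) (delta h)))) \<and>
     delta u = tensor u u \<and>
     (\<forall>g h. eps (mu (tensor g h)) = eps g * eps h) \<and>
     eps u = 1"

definition hom_comodule ::
  "(('h \<Rightarrow>\<^sub>0 'k::field) \<Rightarrow> ('h \<times> 'h \<Rightarrow>\<^sub>0 'k)) \<Rightarrow> (('h \<Rightarrow>\<^sub>0 'k) \<Rightarrow> 'k)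
   \<Rightarrow> (('h \<Rightarrow>\<^sub>0 'k) \<Rightarrow> ('h \<Rightarrow>\<^sub>0 'k))
   \<Rightarrow> (('m \<Rightarrow>\<^sub>0 'k) \<Rightarrow> ('h \<times> 'm \<Rightarrow>\<^sub>0 'k)) \<Rightarrow> (('m \<Rightarrow>\<^sub>0 'k) \<Rightarrow> ('m \<Rightarrow>\<^sub>0 'k)) \<Rightarrow> bool" where
  "hom_comodule deltaH epsH alpha rho nu \<longleftrightarrow>
     is_linear rho \<and> lin_auto nu \<and>
     (\<forall>x. tmap deltaH (inv nu) (rho x) = assocl (tmap (inv alpha) rho (rho x))) \<and>
     (\<forall>x. rho (nu x) = tmap alpha nu (rho x)) \<and>
     (\<forall>x. epsl epsH (rho x) = inv nu x)"

definition hom_comodule_coalgebra ::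
  "(('h \<times> 'h \<Rightarrow>\<^sub>0 'k::field) \<Rightarrow> ('h \<Rightarrow>\<^sub>0 'k)) \<Rightarrow> ('h \<Rightarrow>\<^sub>0 'k)
   \<Rightarrow> (('h \<Rightarrow>\<^sub>0 'k) \<Rightarrow> ('h \<times> 'h \<Rightarrow>\<^sub>0 'k)) \<Rightarrow> (('h \<Rightarrow>\<^sub>0 'k) \<Rightarrow> 'k)
   \<Rightarrow> (('h \<Rightarrow>\<^sub>0 'k) \<Rightarrow> ('h \<Rightarrow>\<^sub>0 'k))
   \<Rightarrow> (('a \<Rightarrow>\<^sub>0 'k) \<Rightarrow> ('a \<times> 'a \<Rightarrow>\<^sub>0 'k)) \<Rightarrow> (('a \<Rightarrow>\<^sub>0 'k) \<Rightarrow> 'k)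
   \<Rightarrow> (('a \<Rightarrow>\<^sub>0 'k) \<Rightarrow> ('a \<Rightarrow>\<^sub>0 'k)) \<Rightarrow> (('a \<Rightarrow>\<^sub>0 'k) \<Rightarrow> ('h \<times> 'a \<Rightarrow>\<^sub>0 'k)) \<Rightarrow> bool" where
  "hom_comodule_coalgebra muH uH deltaH epsH alpha deltaA epsA beta rho \<longleftrightarrow>
     hom_coalgebra deltaA epsA beta \<and>
     hom_comodule deltaH epsH alpha rho beta \<and>
     (\<forall>b. tmap id deltaA (rho b) = tmap muH id (midswap (tmap rho rho (deltaA b)))) \<and>
     (\<forall>b. epsr epsA (rho b) = pm_scale (epsA b) uH)"

text \<open>Comultiplication and counit on A >< H = A (x) H:
  Delta(a >< h) = a1 >< alpha^m(a2(-1)) alpha^-1(h1) (x) beta(a2(0)) >< h2.\<close>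
definition smash_comult ::
  "(('h \<times> 'h \<Rightarrow>\<^sub>0 'k::field) \<Rightarrow> ('h \<Rightarrow>\<^sub>0 'k)) \<Rightarrow> (('h \<Rightarrow>\<^sub>0 'k) \<Rightarrow> ('h \<times> 'h \<Rightarrow>\<^sub>0 'k))
   \<Rightarrow> (('h \<Rightarrow>\<^sub>0 'k) \<Rightarrow> ('h \<Rightarrow>\<^sub>0 'k))
   \<Rightarrow> (('a \<Rightarrow>\<^sub>0 'k) \<Rightarrow> ('a \<times> 'a \<Rightarrow>\<^sub>0 'k)) \<Rightarrow> (('a \<Rightarrow>\<^sub>0 'k) \<Rightarrow> ('a \<Rightarrow>\<^sub>0 'k))
   \<Rightarrow> (('a \<Rightarrow>\<^sub>0 'k) \<Rightarrow> ('h \<times> 'a \<Rightarrow>\<^sub>0 'k)) \<Rightarrow> int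
   \<Rightarrow> ('a \<times> 'h \<Rightarrow>\<^sub>0 'k) \<Rightarrow> (('a \<times> 'h) \<times> ('a \<times> 'h) \<Rightarrow>\<^sub>0 'k)" where
  "smash_comult muH deltaH alpha deltaA beta rho m =
     lin (\<lambda>(x, y).
       tmap (tmap id (\<lambda>v. muH (tmap (hpow alpha m) (inv alpha) v))) (tmap beta id)
         (lin (\<lambda>((a1, (c, a0)), (h1, h2)). bv ((a1, (c, h1)), (a0, h2)))
           (tmap (tmap id rho) id (tensor (deltaA (bv x)) (deltaH (bv y))))))"

definition smash_counit ::
  "(('h \<Rightarrow>\<^sub>0 'k::field) \<Rightarrow> 'k) \<Rightarrow> (('a \<Rightarrow>\<^sub>0 'k) \<Rightarrow> 'k) \<Rightarrow> ('a \<times> 'h \<Rightarrow>\<^sub>0 'k) \<Rightarrow> 'k" where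
  "smash_counit epsH epsA v = (\<Sum>p\<in>Poly_Mapping.keys v. Poly_Mapping.lookup v p * (epsA (bv (fst p)) * epsH (bv (snd p))))"

end

theory Submission
  imports Defs
begin

text \<open>Each Hom-coalgebra axiom for \<open>\<Delta>\<close> on \<open>A \<rtimes> H\<close> is an identity between linear maps out of
\<open>A \<otimes> H\<close>, so it suffices to check it on pure tensors \<open>a \<otimes> h\<close>, where both sides become nested
Sweedler sums. The counit axioms then reduce to those of \<open>A\<close>, \<open>H\<close> and the coaction together with
\<open>\<epsilon>(a(0)) a(-1) = \<epsilon>(a) 1\<close>, and compatibility with \<open>\<beta> \<otimes> \<alpha>\<close> holds because \<open>\<alpha>\<^sup>m\<close> commutes
with \<open>\<alpha>\<close>. For Hom-coassociativity, the left-hand side is rewritten first with the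
comodule-coalgebra compatibility (the coaction of \<open>a\<^sub>2\<close> against the comultiplication of
\<open>a\<^sub>2(0)\<close>), then with Hom-coassociativity of the coaction, of \<open>\<Delta>\<^sub>A\<close> and of \<open>\<Delta>\<^sub>H\<close>. After
reordering the Sweedler sums both sides agree termwise, by Hom-associativity of \<open>\<mu>\<^sub>H\<close> and
multiplicativity of \<open>\<alpha>\<^sup>m\<close> and \<open>\<alpha>\<^sup>-\<^sup>1\<close>.\<close>

section \<open>Linear maps between spaces of finitely supported functions\<close>

lemma lookup_pm_scale [simp]: "Poly_Mapping.lookup (pm_scale c v) k = c * Poly_Mapping.lookup v k"
  unfolding pm_scale_def by (simp add: Poly_Mapping.map.rep_eq when_def)

lemma pm_scale_add_right: "pm_scale c (u + v) = pm_scale c u + pm_scale c v"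
  by (rule poly_mapping_eqI) (simp add: lookup_add algebra_simps)

lemma pm_scale_add_left: "pm_scale (c + d) u = pm_scale c u + pm_scale d u"
  by (rule poly_mapping_eqI) (simp add: lookup_add algebra_simps)

lemma pm_scale_pm_scale [simp]: "pm_scale c (pm_scale d u) = pm_scale (c * d) u"
  by (rule poly_mapping_eqI) simp

lemma pm_scale_one [simp]: "pm_scale 1 u = u"
  by (rule poly_mapping_eqI) simp

lemma pm_scale_zero_left [simp]: "pm_scale 0 u = 0"
  by (rule poly_mapping_eqI) simp

lemma pm_scale_zero_right [simp]: "pm_scale c 0 = 0"
  by (rule poly_mapping_eqI) simp

lemma pm_scale_sum: "pm_scale c (sum f A) = (\<Sum>x\<in>A. pm_scale c (f x))"
  by (induction A rule: infinite_finite_induct) (auto simp: pm_scale_add_right)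

lemma lin_eq_sum_superset:
  assumes "finite S" "Poly_Mapping.keys v \<subseteq> S"
  shows "lin f v = (\<Sum>x\<in>S. pm_scale (Poly_Mapping.lookup v x) (f x))"
  unfolding lin_def by (rule sum.mono_neutral_left) (use assms in \<open>auto simp: in_keys_iff\<close>)

lemma lin_add: "lin f (u + v) = lin f u + lin f v"
proof -
  let ?S = "Poly_Mapping.keys u \<union> Poly_Mapping.keys v"
  have "lin f (u + v) = (\<Sum>x\<in>?S. pm_scale (Poly_Mapping.lookup (u + v) x) (f x))"
    by (rule lin_eq_sum_superset) (use Poly_Mapping.keys_add[of u v] in auto)
  also have "\<dots> = (\<Sum>x\<in>?S. pm_scale (Poly_Mapping.lookup u x) (f x))
                 + (\<Sum>x\<in>?S. pm_scale (Poly_Mapping.lookup v x) (f x))"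
    by (simp add: lookup_add pm_scale_add_left sum.distrib)
  also have "\<dots> = lin f u + lin f v"
    by (subst (1 2) lin_eq_sum_superset[of ?S]) auto
  finally show ?thesis .
qed

lemma lin_pm_scale: "lin f (pm_scale c u) = pm_scale c (lin f u)"
proof -
  have "lin f (pm_scale c u)
        = (\<Sum>x\<in>Poly_Mapping.keys u. pm_scale (Poly_Mapping.lookup (pm_scale c u) x) (f x))"
    by (rule lin_eq_sum_superset) (auto simp: in_keys_iff)
  then show ?thesis by (simp add: lin_def pm_scale_sum)
qed

lemma lin_bv [simp]: "lin f (bv x) = f x"
  by (simp add: lin_def bv_def)

lemma lin_bv_id [simp]: "lin bv v = v"
proof (rule poly_mapping_eqI)
  fix k
  have "Poly_Mapping.lookup (lin bv v) k
        = (\<Sum>x\<in>Poly_Mapping.keys v. Poly_Mapping.lookup v x * (if x = k then 1 else 0))"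
    by (simp add: lin_def lookup_sum bv_def lookup_single when_def)
  also have "\<dots> = Poly_Mapping.lookup v k"
    by (simp add: if_distrib[of "\<lambda>t. _ * t"] sum.delta in_keys_iff cong: if_cong)
  finally show "Poly_Mapping.lookup (lin bv v) k = Poly_Mapping.lookup v k" .
qed

lemma lin_cong: "(\<And>x. x \<in> Poly_Mapping.keys v \<Longrightarrow> f x = g x) \<Longrightarrow> lin f v = lin g v"
  by (simp add: lin_def)

lemma lin_add_fun: "lin (\<lambda>x. f x + g x) v = lin f v + lin g v"
  by (simp add: lin_def pm_scale_add_right sum.distrib)

lemma lin_pm_scale_fun: "lin (\<lambda>x. pm_scale c (f x)) v = pm_scale c (lin f v)"
  by (simp add: lin_def pm_scale_sum mult.commute)

lemma lin_swap: "lin (\<lambda>x. lin (\<lambda>y. f x y) w) v = lin (\<lambda>y. lin (\<lambda>x. f x y) v) w"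
  by (simp add: lin_def pm_scale_sum sum.swap[of _ "Poly_Mapping.keys v"] mult.commute)

lemma is_linear_lin [simp]: "is_linear (lin f)"
  by (simp add: is_linear_def lin_add lin_pm_scale)

lemma linear_add: "is_linear F \<Longrightarrow> F (u + v) = F u + F v"
  by (simp add: is_linear_def)

lemma linear_pm_scale: "is_linear F \<Longrightarrow> F (pm_scale c u) = pm_scale c (F u)"
  by (simp add: is_linear_def)

lemma linear_zero: "is_linear F \<Longrightarrow> F 0 = 0"
  using linear_pm_scale[of F 0 0] by simp

lemma linear_sum: "is_linear F \<Longrightarrow> F (sum f A) = (\<Sum>x\<in>A. F (f x))"
  by (induction A rule: infinite_finite_induct) (auto simp: linear_add linear_zero)

lemma linear_lin: "is_linear F \<Longrightarrow> F (lin f v) = lin (\<lambda>x. F (f x)) v"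
  by (simp add: lin_def linear_sum linear_pm_scale)

lemma lin_lin: "lin g (lin f v) = lin (\<lambda>x. lin g (f x)) v"
  by (rule linear_lin) simp

lemma linear_eq_lin_bv: "is_linear F \<Longrightarrow> F v = lin (\<lambda>x. F (bv x)) v"
  using linear_lin[of F bv v] by simp

lemma linear_eq_on_bv:
  "is_linear F \<Longrightarrow> is_linear G \<Longrightarrow> (\<And>x. F (bv x) = G (bv x)) \<Longrightarrow> F v = G v"
  by (subst (1 2) linear_eq_lin_bv) simp_all

lemma linear_id [simp]: "is_linear (\<lambda>x. x)"
  by (simp add: is_linear_def)

lemma linear_comp: "is_linear F \<Longrightarrow> is_linear f \<Longrightarrow> is_linear (\<lambda>x. F (f x))"
  by (simp add: is_linear_def)

lemma linear_lin_comp [simp]: "is_linear f \<Longrightarrow> is_linear (\<lambda>x. lin g (f x))"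
  using linear_comp[OF is_linear_lin] by blast

lemma linear_lin_fun [simp]: "(\<And>p. is_linear (\<lambda>x. g x p)) \<Longrightarrow> is_linear (\<lambda>x. lin (g x) v)"
  unfolding is_linear_def lin_def
  by (simp add: pm_scale_add_right sum.distrib pm_scale_sum mult.commute)

lemma linear_pm_scale_const [simp]: "is_linear (pm_scale c)"
  unfolding is_linear_def by (auto simp: pm_scale_add_right mult.commute)

lemma lin_auto_inv:
  assumes "lin_auto f"
  shows "is_linear (inv f)" "f (inv f x) = x" "inv f (f x) = x" "lin_auto (inv f)"
proof -
  have b: "bij f" and l: "is_linear f" using assms by (auto simp: lin_auto_def)
  have fi: "f (inv f y) = y" for y using b by (simp add: bij_is_surj surj_f_inv_f)
  have iff: "inv f (f y) = y" for y using b by (simp add: bij_is_inj inv_f_f)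
  show "f (inv f x) = x" "inv f (f x) = x" using fi iff by auto
  show il: "is_linear (inv f)"
    unfolding is_linear_def
  proof (intro conjI allI)
    fix u v
    have "inv f (u + v) = inv f (f (inv f u) + f (inv f v))" by (simp add: fi)
    also have "\<dots> = inv f u + inv f v" by (simp add: linear_add[OF l, symmetric] iff)
    finally show "inv f (u + v) = inv f u + inv f v" .
  next
    fix c u
    have "inv f (pm_scale c u) = inv f (pm_scale c (f (inv f u)))" by (simp add: fi)
    also have "\<dots> = pm_scale c (inv f u)" by (simp add: linear_pm_scale[OF l, symmetric] iff)
    finally show "inv f (pm_scale c u) = pm_scale c (inv f u)" .
  qed
  show "lin_auto (inv f)" using il b by (simp add: lin_auto_def bij_imp_bij_inv)
qed

lemma hpow_closed:
  assumes "Q (\<lambda>x. x)" "Q f" "Q (inv f)" "\<And>g h. Q g \<Longrightarrow> Q h \<Longrightarrow> Q (\<lambda>x. g (h x))"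
  shows "Q (hpow f m)"
proof -
  have "Q (g ^^ n)" if "Q g" for g n
    using that by (induction n) (simp_all add: assms(1,4) id_def comp_def)
  then show ?thesis unfolding hpow_def using assms(2,3) by simp
qed

lemma linfun_add: "is_linfun f \<Longrightarrow> f (u + v) = f u + f v"
  by (simp add: is_linfun_def)

lemma linfun_pm_scale: "is_linfun f \<Longrightarrow> f (pm_scale c u) = c * f u"
  by (simp add: is_linfun_def)

lemma linfun_zero: "is_linfun f \<Longrightarrow> f 0 = 0"
  using linfun_pm_scale[of f 0 0] by simp

lemma linfun_sum: "is_linfun f \<Longrightarrow> f (sum g A) = (\<Sum>x\<in>A. f (g x))"
  by (induction A rule: infinite_finite_induct) (auto simp: linfun_add linfun_zero)

lemma linfun_lin:
  "is_linfun f \<Longrightarrow> f (lin g v) = (\<Sum>x\<in>Poly_Mapping.keys v. Poly_Mapping.lookup v x * f (g x))"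
  by (simp add: lin_def linfun_sum linfun_pm_scale)

lemma linfun_eq_on_bv: "is_linfun f \<Longrightarrow> is_linfun g \<Longrightarrow> (\<And>x. f (bv x) = g (bv x)) \<Longrightarrow> f v = g v"
  using linfun_lin[of f bv v] linfun_lin[of g bv v] by simp

lemma linfun_comp: "is_linfun f \<Longrightarrow> is_linear F \<Longrightarrow> is_linfun (\<lambda>x. f (F x))"
  by (simp add: is_linfun_def is_linear_def)

lemma linfun_mult_right: "is_linfun f \<Longrightarrow> is_linfun (\<lambda>x. f x * c)"
  by (simp add: is_linfun_def algebra_simps)

lemma linfun_mult_left: "is_linfun f \<Longrightarrow> is_linfun (\<lambda>x. c * f x)"
  by (simp add: is_linfun_def algebra_simps)

lemma linear_pm_scale_linfun [simp]: "is_linfun e \<Longrightarrow> is_linear (\<lambda>x. pm_scale (e x) w)"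
  by (simp add: is_linfun_def is_linear_def pm_scale_add_left)

lemma linfun_keys_sum:
  "is_linfun (\<lambda>v. \<Sum>p\<in>Poly_Mapping.keys v. Poly_Mapping.lookup v p * g p)"
  (is "is_linfun ?f")
proof -
  have superset: "?f v = (\<Sum>p\<in>S. Poly_Mapping.lookup v p * g p)"
    if "finite S" "Poly_Mapping.keys v \<subseteq> S" for v S
    by (rule sum.mono_neutral_left) (use that in \<open>auto simp: in_keys_iff\<close>)
  show ?thesis
    unfolding is_linfun_def
  proof (intro conjI allI)
    fix u v :: "'a \<Rightarrow>\<^sub>0 'b"
    let ?S = "Poly_Mapping.keys u \<union> Poly_Mapping.keys v"
    have "?f (u + v) = (\<Sum>p\<in>?S. Poly_Mapping.lookup (u + v) p * g p)"
      by (rule superset) (use Poly_Mapping.keys_add[of u v] in auto)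
    also have "\<dots> = (\<Sum>p\<in>?S. Poly_Mapping.lookup u p * g p) + (\<Sum>p\<in>?S. Poly_Mapping.lookup v p * g p)"
      by (simp add: lookup_add algebra_simps sum.distrib)
    also have "\<dots> = ?f u + ?f v"
      by (simp add: superset[of ?S u] superset[of ?S v])
    finally show "?f (u + v) = ?f u + ?f v" .
  next
    fix c and u :: "'a \<Rightarrow>\<^sub>0 'b"
    have "?f (pm_scale c u) = (\<Sum>p\<in>Poly_Mapping.keys u. Poly_Mapping.lookup (pm_scale c u) p * g p)"
      by (rule superset) (auto simp: in_keys_iff)
    then show "?f (pm_scale c u) = c * ?f u"
      by (simp add: sum_distrib_left algebra_simps)
  qed
qed

section \<open>Tensor products and Sweedler notation\<close>

lemma tensor_bv [simp]: "tensor (bv x) (bv y) = bv (x, y)"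
  by (simp add: tensor_def)

lemma linear_tensor_left [simp]: "is_linear (\<lambda>u. tensor u w)"
  unfolding tensor_def by simp

lemma linear_tensor_right [simp]: "is_linear (tensor u)"
  unfolding tensor_def is_linear_def by (simp add: lin_add lin_pm_scale lin_add_fun lin_pm_scale_fun)

lemma linear_tensor_left_comp [simp]: "is_linear f \<Longrightarrow> is_linear (\<lambda>x. tensor (f x) w)"
  using linear_comp[OF linear_tensor_left] by blast

lemma linear_tensor_right_comp [simp]: "is_linear f \<Longrightarrow> is_linear (\<lambda>x. tensor w (f x))"
  using linear_comp[OF linear_tensor_right] by blast

lemma tensor_pm_scale_left: "tensor (pm_scale c u) w = pm_scale c (tensor u w)"
  by (rule linear_pm_scale[OF linear_tensor_left])

lemma tensor_pm_scale_right: "tensor u (pm_scale c w) = pm_scale c (tensor u w)"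
  by (rule linear_pm_scale[OF linear_tensor_right])

lemma tensor_linear_maps:
  assumes f: "is_linear f" and g: "is_linear g"
  shows "tensor (f u) (g w) = lin (\<lambda>(x, y). tensor (f (bv x)) (g (bv y))) (tensor u w)"
proof -
  have "lin (\<lambda>(x, y). tensor (f (bv x)) (g (bv y))) (tensor u w)
        = lin (\<lambda>x. lin (\<lambda>y. tensor (f (bv x)) (g (bv y))) w) u"
    by (simp add: tensor_def lin_lin)
  also have "\<dots> = lin (\<lambda>x. tensor (f (bv x)) (g w)) u"
    by (subst (2) linear_eq_lin_bv[OF g]) (simp add: linear_lin[OF linear_tensor_right])
  also have "\<dots> = tensor (f u) (g w)"
    by (subst (2) linear_eq_lin_bv[OF f]) (simp add: linear_lin[OF linear_tensor_left])
  finally show ?thesis by simp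
qed

lemma linear_tmap [simp]: "is_linear (tmap f g)"
  by (simp add: tmap_def)

lemma linear_tmap_comp [simp]: "is_linear h \<Longrightarrow> is_linear (\<lambda>x. tmap f g (h x))"
  using linear_comp[OF linear_tmap] by blast

lemma tmap_tensor [simp]: "is_linear f \<Longrightarrow> is_linear g \<Longrightarrow> tmap f g (tensor u w) = tensor (f u) (g w)"
  unfolding tmap_def by (rule tensor_linear_maps[symmetric])

lemma tmap_bv [simp]: "tmap f g (bv (x, y)) = tensor (f (bv x)) (g (bv y))"
  by (simp add: tmap_def)

lemma linear_eq_on_tensors:
  assumes "is_linear F" "is_linear G" "\<And>u w. F (tensor u w) = G (tensor u w)"
  shows "F = G"
proof
  fix v
  show "F v = G v"
  proof (rule linear_eq_on_bv[OF assms(1,2)])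
    fix x :: "'a \<times> 'b"
    obtain p q where x: "x = (p, q)" by (cases x)
    show "F (bv x) = G (bv x)" unfolding x using assms(3)[of "bv p" "bv q"] by simp
  qed
qed

lemma linear_assocr [simp]: "is_linear assocr"
  by (simp add: assocr_def)

lemma linear_assocl [simp]: "is_linear assocl"
  by (simp add: assocl_def)

lemma linear_midswap [simp]: "is_linear midswap"
  by (simp add: midswap_def)

lemma linear_epsr [simp]: "is_linear (epsr e)"
  by (simp add: epsr_def)

lemma linear_epsl [simp]: "is_linear (epsl e)"
  by (simp add: epsl_def)

text \<open>\<open>sweedler X K\<close> is \<open>\<Sum>\<^sub>i K x\<^sub>i y\<^sub>i\<close> for \<open>X = \<Sum>\<^sub>i x\<^sub>i \<otimes> y\<^sub>i\<close>, computed on the basis of \<open>X\<close>;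
in Sweedler notation it is \<open>K X\<^sub>1 X\<^sub>2\<close>. For bilinear \<open>K\<close> it is the linear map on the tensor
product induced by \<open>K\<close>.\<close>

definition sweedler :: "('a \<times> 'b \<Rightarrow>\<^sub>0 'k::field)
    \<Rightarrow> (('a \<Rightarrow>\<^sub>0 'k) \<Rightarrow> ('b \<Rightarrow>\<^sub>0 'k) \<Rightarrow> ('c \<Rightarrow>\<^sub>0 'k)) \<Rightarrow> ('c \<Rightarrow>\<^sub>0 'k)" where
  "sweedler X K = lin (\<lambda>(p, q). K (bv p) (bv q)) X"

lemma linear_sweedler [simp]: "is_linear (\<lambda>X. sweedler X K)"
  by (simp add: sweedler_def)

lemma linear_sweedler_comp [simp]: "is_linear f \<Longrightarrow> is_linear (\<lambda>x. sweedler (f x) K)"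
  using linear_comp[OF linear_sweedler] by blast

lemma linear_sweedler_fun [simp]:
  "(\<And>a b. is_linear (\<lambda>x. K x a b)) \<Longrightarrow> is_linear (\<lambda>x. sweedler X (K x))"
  unfolding sweedler_def by (rule linear_lin_fun) (simp add: split_beta)

lemma sweedler_push: "is_linear F \<Longrightarrow> F (sweedler X K) = sweedler X (\<lambda>a b. F (K a b))"
  unfolding sweedler_def by (subst linear_lin) (auto simp: case_prod_unfold)

lemma sweedler_bv [simp]: "sweedler (bv (x, y)) K = K (bv x) (bv y)"
  by (simp add: sweedler_def)

lemma sweedler_tensor [simp]:
  assumes "\<And>w. is_linear (\<lambda>u. K u w)" "\<And>u. is_linear (\<lambda>w. K u w)"
  shows "sweedler (tensor u w) K = K u w"
proof -
  have "sweedler (tensor u w) K = lin (\<lambda>x. lin (\<lambda>y. K (bv x) (bv y)) w) u"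
    by (simp add: sweedler_def tensor_def lin_lin)
  also have "\<dots> = lin (\<lambda>x. K (bv x) w) u"
    using linear_eq_lin_bv[OF assms(2), symmetric] by simp
  also have "\<dots> = K u w"
    using linear_eq_lin_bv[OF assms(1), symmetric] by simp
  finally show ?thesis .
qed

lemma sweedler_cong: "(\<And>a b. K a b = K' a b) \<Longrightarrow> sweedler X K = sweedler X K'"
  by (metis ext)

lemma sweedler_cong_bv: "(\<And>p q. K (bv p) (bv q) = K' (bv p) (bv q)) \<Longrightarrow> sweedler X K = sweedler X K'"
  unfolding sweedler_def by (rule lin_cong) auto

lemma sweedler_sweedler: "sweedler (sweedler X K) L = sweedler X (\<lambda>a b. sweedler (K a b) L)"
  by (rule sweedler_push) simp

lemma sweedler_swap:
  "sweedler X (\<lambda>a b. sweedler Y (\<lambda>c d. K a b c d)) = sweedler Y (\<lambda>c d. sweedler X (\<lambda>a b. K a b c d))"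
  unfolding sweedler_def split_beta by (rule lin_swap)

lemma sweedler_tensor_id [simp]: "sweedler X tensor = X"
proof -
  have "sweedler X tensor = lin bv X"
    by (simp add: sweedler_def split_beta)
  then show ?thesis by simp
qed

lemma tmap_sweedler: "tmap f g X = sweedler X (\<lambda>a b. tensor (f a) (g b))"
  by (simp add: tmap_def sweedler_def split_beta)

lemma tmap_id_id [simp]: "tmap (\<lambda>x. x) (\<lambda>x. x) X = X" "tmap id id X = X"
  by (simp_all add: tmap_sweedler id_def)

lemma tmap_tmap:
  "is_linear f \<Longrightarrow> is_linear g \<Longrightarrow> is_linear f' \<Longrightarrow> is_linear g' \<Longrightarrow>
   tmap f g (tmap f' g' X) = tmap (\<lambda>x. f (f' x)) (\<lambda>x. g (g' x)) X"
  by (simp add: tmap_sweedler[of f' g' X] tmap_sweedler[of "\<lambda>x. f (f' x)"]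
      sweedler_push[where F = "tmap f g"])

lemma tensor_sweedler_left: "tensor (sweedler X K) w = sweedler X (\<lambda>a b. tensor (K a b) w)"
  by (rule sweedler_push) simp

lemma tensor_sweedler_right: "tensor w (sweedler X K) = sweedler X (\<lambda>a b. tensor w (K a b))"
  by (rule sweedler_push) simp

lemma tensor_eq_sweedler:
  "tensor X Y = sweedler X (\<lambda>a b. sweedler Y (\<lambda>c d. tensor (tensor a b) (tensor c d)))"
proof -
  have inner: "sweedler Y (\<lambda>c d. tensor (tensor a b) (tensor c d)) = tensor (tensor a b) Y" for a b
    using tensor_sweedler_right[of "tensor a b" Y tensor] by simp
  have outer: "sweedler X (\<lambda>a b. tensor (tensor a b) Y) = tensor X Y"
    using tensor_sweedler_left[of X tensor Y] by simp
  show ?thesis by (simp only: inner outer)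
qed

lemma assocr_tensor_tensor [simp]: "assocr (tensor (tensor a b) c) = tensor a (tensor b c)"
proof -
  have "assocr (tensor (tensor a b) c) = lin (\<lambda>x. lin (\<lambda>y. lin (\<lambda>z. bv (x, y, z)) c) b) a"
    by (simp add: assocr_def tensor_def lin_lin)
  moreover have "lin (\<lambda>y. lin (\<lambda>z. bv (x, y, z)) c) b = lin (\<lambda>z. lin (\<lambda>y. bv (x, y, z)) b) c" for x
    by (rule lin_swap)
  ultimately show ?thesis by (simp add: tensor_def lin_lin)
qed

lemma assocl_tensor_tensor [simp]: "assocl (tensor a (tensor b c)) = tensor (tensor a b) c"
  by (simp add: assocl_def tensor_def lin_lin)

lemma midswap_tensor_tensor [simp]:
  "midswap (tensor (tensor a b) (tensor c d)) = tensor (tensor a c) (tensor b d)"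
  by (simp add: midswap_def tensor_def lin_lin lin_swap[of _ c b])

lemma assocr_sweedler: "assocr X = sweedler X (\<lambda>ab c. sweedler ab (\<lambda>a b. tensor a (tensor b c)))"
proof -
  have on_tensors: "assocr (tensor ab c) = sweedler ab (\<lambda>a b. tensor a (tensor b c))" for ab c
  proof -
    have "assocr (tensor ab c) = assocr (tensor (sweedler ab tensor) c)" by simp
    also have "\<dots> = sweedler ab (\<lambda>a b. tensor a (tensor b c))"
      by (subst sweedler_push[where F = "\<lambda>z. tensor z c"], simp, subst sweedler_push, simp_all)
    finally show ?thesis .
  qed
  have "assocr X = sweedler X (\<lambda>ab c. assocr (tensor ab c))"
    unfolding sweedler_def assocr_def by (simp add: case_prod_unfold tensor_def)
  then show ?thesis by (simp only: on_tensors)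
qed

lemma assocl_sweedler: "assocl X = sweedler X (\<lambda>a bc. sweedler bc (\<lambda>b c. tensor (tensor a b) c))"
proof -
  have on_tensors: "assocl (tensor a bc) = sweedler bc (\<lambda>b c. tensor (tensor a b) c)" for a bc
  proof -
    have "assocl (tensor a bc) = assocl (tensor a (sweedler bc tensor))" by simp
    also have "\<dots> = sweedler bc (\<lambda>b c. tensor (tensor a b) c)"
      by (subst sweedler_push[where F = "\<lambda>z. tensor a z"], simp, subst sweedler_push, simp_all)
    finally show ?thesis .
  qed
  have "assocl X = sweedler X (\<lambda>a bc. assocl (tensor a bc))"
    unfolding sweedler_def assocl_def by (simp add: case_prod_unfold tensor_def)
  then show ?thesis by (simp only: on_tensors)
qed

lemma midswap_sweedler:
  "midswap X = sweedler X (\<lambda>ab cd. sweedler ab (\<lambda>a b. sweedler cd (\<lambda>c d. tensor (tensor a c) (tensor b d))))"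
proof -
  have on_tensors: "midswap (tensor ab cd) = sweedler ab (\<lambda>a b. sweedler cd (\<lambda>c d. tensor (tensor a c) (tensor b d)))"
    for ab cd
    by (subst (1 2) tensor_eq_sweedler) (simp add: sweedler_push[of midswap])
  have "midswap X = sweedler X (\<lambda>ab cd. midswap (tensor ab cd))"
    unfolding sweedler_def midswap_def by (simp add: case_prod_unfold tensor_def)
  then show ?thesis by (simp only: on_tensors)
qed

lemma epsr_sweedler: "epsr e X = sweedler X (\<lambda>a b. pm_scale (e b) a)"
  by (simp add: epsr_def sweedler_def case_prod_unfold)

lemma epsl_sweedler: "epsl e X = sweedler X (\<lambda>a b. pm_scale (e a) b)"
  by (simp add: epsl_def sweedler_def case_prod_unfold)

lemma sweedler_counit_right: "is_linear K \<Longrightarrow> sweedler X (\<lambda>a b. pm_scale (e b) (K a)) = K (epsr e X)"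
  by (simp add: epsr_sweedler sweedler_push linear_pm_scale)

lemma sweedler_counit_left: "is_linear K \<Longrightarrow> sweedler X (\<lambda>a b. pm_scale (e a) (K b)) = K (epsl e X)"
  by (simp add: epsl_sweedler sweedler_push linear_pm_scale)

lemma sweedler_counit_right_scaled:
  "is_linear K \<Longrightarrow> sweedler X (\<lambda>a b. pm_scale (e b * s) (K a)) = pm_scale s (K (epsr e X))"
  by (simp add: sweedler_counit_right[symmetric] sweedler_push[OF linear_pm_scale_const] linear_pm_scale
      mult.commute)

lemma sweedler_counit_left_scaled:
  "is_linear K \<Longrightarrow> sweedler X (\<lambda>a b. pm_scale (e a * s) (K b)) = pm_scale s (K (epsl e X))"
  by (simp add: sweedler_counit_left[symmetric] sweedler_push[OF linear_pm_scale_const] linear_pm_scale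
      mult.commute)

lemma inv_tmap:
  assumes "lin_auto f" "lin_auto g"
  shows "inv (tmap f g) = tmap (inv f) (inv g)"
  using assms by (intro inv_equality) (simp_all add: tmap_tmap lin_auto_inv lin_auto_def)

lemma lin_auto_tmap:
  assumes "lin_auto f" "lin_auto g"
  shows "lin_auto (tmap f g)"
  unfolding lin_auto_def
proof
  show "bij (tmap f g)"
    using assms by (intro o_bij[where g = "tmap (inv f) (inv g)"])
      (simp_all add: fun_eq_iff tmap_tmap lin_auto_inv lin_auto_def)
qed simp

section \<open>Hom-coalgebras and Hom-comodules in Sweedler form\<close>

lemma intertwines_inv:
  assumes "lin_auto f" "lin_auto g" "lin_auto h" "\<And>x. D (f x) = tmap g h (D x)"
  shows "D (inv f x) = tmap (inv g) (inv h) (D x)"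
proof -
  have "tmap (inv g) (inv h) (D x) = tmap (inv g) (inv h) (D (f (inv f x)))"
    using lin_auto_inv(2)[OF assms(1)] by simp
  also have "\<dots> = tmap (inv g) (inv h) (tmap g h (D (inv f x)))"
    by (simp only: assms(4))
  also have "\<dots> = D (inv f x)"
    using assms(2,3) by (simp add: tmap_tmap lin_auto_inv lin_auto_def)
  finally show ?thesis by simp
qed

lemma hom_coalgebra_coassoc_sweedler:
  assumes "hom_coalgebra delta eps gamma"
    and T: "\<And>y z. is_linear (\<lambda>x. T x y z)" "\<And>x z. is_linear (\<lambda>y. T x y z)" "\<And>x y. is_linear (\<lambda>z. T x y z)"
  shows "sweedler (delta u) (\<lambda>a1 a2. sweedler (delta a2) (\<lambda>b1 b2. T a1 b1 b2))
       = sweedler (delta u) (\<lambda>a1 a2. sweedler (delta a1) (\<lambda>b1 b2. T (gamma b1) b2 (inv gamma a2)))"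
proof -
  have delta: "is_linear delta" and gamma: "lin_auto gamma"
    and coassoc: "tmap (inv gamma) delta (delta u) = assocr (tmap delta (inv gamma) (delta u))"
    using assms(1) by (auto simp: hom_coalgebra_def)
  have T_gamma: "is_linear (\<lambda>x. T (gamma x) y z)" for y z
    using linear_comp[OF T(1)[of y z], of gamma] gamma by (simp add: lin_auto_def)
  let ?G = "\<lambda>Z. sweedler Z (\<lambda>a bc. sweedler bc (\<lambda>b c. T (gamma a) b c))"
  have "?G (tmap (inv gamma) delta (delta u)) = ?G (assocr (tmap delta (inv gamma) (delta u)))"
    by (simp only: coassoc)
  then show ?thesis
    by (simp add: tmap_sweedler assocr_sweedler sweedler_sweedler tensor_sweedler_left
        tensor_sweedler_right sweedler_push[OF delta] lin_auto_inv[OF gamma] T T_gamma)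
qed

lemma hom_comodule_coassoc_sweedler:
  assumes "hom_comodule deltaH epsH alpha rho nu" "is_linear deltaH" "lin_auto alpha"
    and T: "\<And>y z. is_linear (\<lambda>x. T x y z)" "\<And>x z. is_linear (\<lambda>y. T x y z)" "\<And>x y. is_linear (\<lambda>z. T x y z)"
  shows "sweedler (rho x) (\<lambda>c f. sweedler (rho f) (\<lambda>d b. T c d b))
       = sweedler (rho x) (\<lambda>c f. sweedler (deltaH c) (\<lambda>p q. T (alpha p) q (inv nu f)))"
proof -
  have rho: "is_linear rho"
    and coassoc: "tmap deltaH (inv nu) (rho x) = assocl (tmap (inv alpha) rho (rho x))"
    using assms(1) by (auto simp: hom_comodule_def)
  have T_alpha: "is_linear (\<lambda>x. T (alpha x) y z)" for y z
    using linear_comp[OF T(1)[of y z], of alpha] assms(3) by (simp add: lin_auto_def)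
  let ?G = "\<lambda>Z. sweedler Z (\<lambda>pq f. sweedler pq (\<lambda>p q. T (alpha p) q f))"
  have "?G (tmap deltaH (inv nu) (rho x)) = ?G (assocl (tmap (inv alpha) rho (rho x)))"
    by (simp only: coassoc)
  then show ?thesis
    by (simp add: tmap_sweedler assocl_sweedler sweedler_sweedler tensor_sweedler_left
        tensor_sweedler_right sweedler_push[OF rho] sweedler_push[OF assms(2)]
        lin_auto_inv[OF assms(3)] T T_alpha)
qed

lemma hom_comodule_coalgebra_sweedler:
  assumes "hom_comodule_coalgebra muH uH deltaH epsH alpha deltaA epsA beta rho" "is_linear muH"
    and T: "\<And>y z. is_linear (\<lambda>x. T x y z)" "\<And>x z. is_linear (\<lambda>y. T x y z)" "\<And>x y. is_linear (\<lambda>z. T x y z)"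
  shows "sweedler (rho x) (\<lambda>c a0. sweedler (deltaA a0) (\<lambda>b1 b2. T c b1 b2))
       = sweedler (deltaA x) (\<lambda>e1 e2. sweedler (rho e1) (\<lambda>c1 f1. sweedler (rho e2) (\<lambda>c2 f2.
           T (muH (tensor c1 c2)) f1 f2)))"
proof -
  have linear: "is_linear rho" "is_linear deltaA"
    and compat: "tmap id deltaA (rho x) = tmap muH id (midswap (tmap rho rho (deltaA x)))"
    using assms(1) by (auto simp: hom_comodule_coalgebra_def hom_comodule_def hom_coalgebra_def)
  let ?G = "\<lambda>Z. sweedler Z (\<lambda>c bb. sweedler bb (\<lambda>b1 b2. T c b1 b2))"
  have "?G (tmap id deltaA (rho x)) = ?G (tmap muH id (midswap (tmap rho rho (deltaA x))))"
    by (simp only: compat)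
  moreover have T_mu: "is_linear (\<lambda>x. T (muH x) y z)" for y z
    using linear_comp[OF T(1)[of y z] assms(2)] .
  ultimately show ?thesis
    by (simp add: tmap_sweedler midswap_sweedler sweedler_sweedler tensor_sweedler_left
        tensor_sweedler_right sweedler_push[OF linear(1)] sweedler_push[OF linear(2)]
        sweedler_push[OF assms(2)] T)
qed

lemma linfun_smash_counit: "is_linfun (smash_counit epsH epsA)"
  unfolding smash_counit_def by (rule linfun_keys_sum)

lemma smash_counit_tensor:
  fixes epsA :: "('a \<Rightarrow>\<^sub>0 'k::field) \<Rightarrow> 'k" and epsH :: "('h \<Rightarrow>\<^sub>0 'k) \<Rightarrow> 'k"
  assumes "is_linfun epsA" "is_linfun epsH"
  shows "smash_counit epsH epsA (tensor u w) = epsA u * epsH w"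
proof -
  have on_bv: "smash_counit epsH epsA (bv (x, y)) = epsA (bv x) * epsH (bv y)" for x y
    by (simp add: smash_counit_def bv_def)
  have "smash_counit epsH epsA (tensor (bv x) w) = epsA (bv x) * epsH w" for x
    by (rule linfun_eq_on_bv[OF linfun_comp[OF linfun_smash_counit linear_tensor_right]
          linfun_mult_left[OF assms(2)]]) (simp add: on_bv)
  then show ?thesis
    by (intro linfun_eq_on_bv[OF linfun_comp[OF linfun_smash_counit linear_tensor_left]
          linfun_mult_right[OF assms(1)], where v = u]) simp
qed

lemma smash_counit_tmap:
  fixes epsA :: "('a \<Rightarrow>\<^sub>0 'k::field) \<Rightarrow> 'k" and epsH :: "('h \<Rightarrow>\<^sub>0 'k) \<Rightarrow> 'k"
  assumes "is_linfun epsA" "is_linfun epsH" "\<And>x. epsA (beta x) = epsA x" "\<And>x. epsH (alpha x) = epsH x"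
  shows "smash_counit epsH epsA (tmap beta alpha c) = smash_counit epsH epsA c"
proof (rule linfun_eq_on_bv[OF linfun_comp[OF linfun_smash_counit linear_tmap] linfun_smash_counit])
  fix x :: "'a \<times> 'h"
  obtain p q where x: "x = (p, q)" by (cases x)
  show "smash_counit epsH epsA (tmap beta alpha (bv x)) = smash_counit epsH epsA (bv x)"
    using smash_counit_tensor[OF assms(1,2), of "bv p" "bv q"] assms
    by (simp add: x smash_counit_tensor)
qed

section \<open>The smash coproduct\<close>

locale smash_coproduct =
  fixes muH :: "('h \<times> 'h \<Rightarrow>\<^sub>0 'k::field) \<Rightarrow> ('h \<Rightarrow>\<^sub>0 'k)"
    and uH :: "'h \<Rightarrow>\<^sub>0 'k"
    and deltaH :: "('h \<Rightarrow>\<^sub>0 'k) \<Rightarrow> ('h \<times> 'h \<Rightarrow>\<^sub>0 'k)"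
    and epsH :: "('h \<Rightarrow>\<^sub>0 'k) \<Rightarrow> 'k"
    and alpha :: "('h \<Rightarrow>\<^sub>0 'k) \<Rightarrow> ('h \<Rightarrow>\<^sub>0 'k)"
    and deltaA :: "('a \<Rightarrow>\<^sub>0 'k) \<Rightarrow> ('a \<times> 'a \<Rightarrow>\<^sub>0 'k)"
    and epsA :: "('a \<Rightarrow>\<^sub>0 'k) \<Rightarrow> 'k"
    and beta :: "('a \<Rightarrow>\<^sub>0 'k) \<Rightarrow> ('a \<Rightarrow>\<^sub>0 'k)"
    and rho :: "('a \<Rightarrow>\<^sub>0 'k) \<Rightarrow> ('h \<times> 'a \<Rightarrow>\<^sub>0 'k)"
    and m :: int
  assumes H_bialgebra: "hom_bialgebra muH uH deltaH epsH alpha"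
    and A_comodule_coalgebra: "hom_comodule_coalgebra muH uH deltaH epsH alpha deltaA epsA beta rho"
begin

abbreviation "alpha_inv \<equiv> inv alpha"
abbreviation "beta_inv \<equiv> inv beta"
abbreviation "alpha_m \<equiv> hpow alpha m"
abbreviation "Delta \<equiv> smash_comult muH deltaH alpha deltaA beta rho m"
abbreviation "eps \<equiv> smash_counit epsH epsA"
abbreviation "gamma \<equiv> tmap beta alpha"

lemma H_algebra: "hom_algebra muH uH alpha"
  using H_bialgebra by (simp add: hom_bialgebra_def)

lemma H_coalgebra: "hom_coalgebra deltaH epsH alpha"
  using H_bialgebra by (simp add: hom_bialgebra_def)

lemma A_coalgebra: "hom_coalgebra deltaA epsA beta"
  using A_comodule_coalgebra by (simp add: hom_comodule_coalgebra_def)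

lemma A_comodule: "hom_comodule deltaH epsH alpha rho beta"
  using A_comodule_coalgebra by (simp add: hom_comodule_coalgebra_def)

lemma muH_linear [simp]: "is_linear muH"
  and alpha_auto: "lin_auto alpha"
  and muH_hom_assoc: "muH (tensor (alpha a) (muH (tensor b c))) = muH (tensor (muH (tensor a b)) (alpha c))"
  and alpha_muH: "alpha (muH (tensor a b)) = muH (tensor (alpha a) (alpha b))"
  and muH_unit: "muH (tensor a uH) = alpha a" "muH (tensor uH a) = alpha a"
  and alpha_uH [simp]: "alpha uH = uH"
  using H_algebra by (simp_all add: hom_algebra_def)

lemma deltaH_linear [simp]: "is_linear deltaH"
  and epsH_linfun [simp]: "is_linfun epsH"
  and deltaH_alpha: "deltaH (alpha c) = tmap alpha alpha (deltaH c)"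
  and deltaH_counit: "epsr epsH (deltaH c) = alpha_inv c" "epsl epsH (deltaH c) = alpha_inv c"
  and epsH_alpha [simp]: "epsH (alpha c) = epsH c"
  using H_coalgebra by (simp_all add: hom_coalgebra_def)

lemma deltaH_muH: "deltaH (muH (tensor g h)) = tmap muH muH (midswap (tensor (deltaH g) (deltaH h)))"
  and epsH_muH: "epsH (muH (tensor g h)) = epsH g * epsH h"
  and epsH_uH [simp]: "epsH uH = 1"
  using H_bialgebra by (simp_all add: hom_bialgebra_def)

lemma deltaA_linear [simp]: "is_linear deltaA"
  and epsA_linfun [simp]: "is_linfun epsA"
  and beta_auto: "lin_auto beta"
  and deltaA_beta: "deltaA (beta c) = tmap beta beta (deltaA c)"
  and deltaA_counit: "epsr epsA (deltaA c) = beta_inv c" "epsl epsA (deltaA c) = beta_inv c"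
  and epsA_beta [simp]: "epsA (beta c) = epsA c"
  using A_coalgebra by (simp_all add: hom_coalgebra_def)

lemma rho_linear [simp]: "is_linear rho"
  and rho_beta: "rho (beta x) = tmap alpha beta (rho x)"
  and rho_counit: "epsl epsH (rho x) = beta_inv x"
  using A_comodule by (simp_all add: hom_comodule_def)

lemma rho_epsA: "epsr epsA (rho b) = pm_scale (epsA b) uH"
  using A_comodule_coalgebra by (simp add: hom_comodule_coalgebra_def)

lemma alpha_linear [simp]: "is_linear alpha"
  and beta_linear [simp]: "is_linear beta"
  using alpha_auto beta_auto by (simp_all add: lin_auto_def)

lemma alpha_inv_linear [simp]: "is_linear alpha_inv"
  and beta_inv_linear [simp]: "is_linear beta_inv"
  and alpha_alpha_inv [simp]: "alpha (alpha_inv x) = x" "alpha_inv (alpha x) = x"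
  and beta_beta_inv [simp]: "beta (beta_inv y) = y" "beta_inv (beta y) = y"
  using lin_auto_inv[OF alpha_auto] lin_auto_inv[OF beta_auto] by simp_all

lemma deltaH_alpha_inv: "deltaH (alpha_inv x) = tmap alpha_inv alpha_inv (deltaH x)"
  by (rule intertwines_inv[where D = deltaH, OF alpha_auto alpha_auto alpha_auto deltaH_alpha])

lemma deltaA_beta_inv: "deltaA (beta_inv x) = tmap beta_inv beta_inv (deltaA x)"
  by (rule intertwines_inv[where D = deltaA, OF beta_auto beta_auto beta_auto deltaA_beta])

lemma rho_beta_inv: "rho (beta_inv x) = tmap alpha_inv beta_inv (rho x)"
  by (rule intertwines_inv[where D = rho, OF beta_auto alpha_auto beta_auto rho_beta])

lemma alpha_inv_muH: "alpha_inv (muH (tensor x y)) = muH (tensor (alpha_inv x) (alpha_inv y))"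
  by (metis alpha_alpha_inv alpha_muH)

lemma epsH_alpha_inv [simp]: "epsH (alpha_inv x) = epsH x"
  by (metis alpha_alpha_inv(1) epsH_alpha)

definition hom_bialgebra_endo :: "(('h \<Rightarrow>\<^sub>0 'k) \<Rightarrow> ('h \<Rightarrow>\<^sub>0 'k)) \<Rightarrow> bool" where
  "hom_bialgebra_endo f \<longleftrightarrow> is_linear f \<and> (\<forall>x. f (alpha x) = alpha (f x))
     \<and> (\<forall>x y. f (muH (tensor x y)) = muH (tensor (f x) (f y)))
     \<and> (\<forall>x. deltaH (f x) = tmap f f (deltaH x)) \<and> (\<forall>x. epsH (f x) = epsH x) \<and> f uH = uH"

lemma hom_bialgebra_endo_alpha_m: "hom_bialgebra_endo alpha_m"
proof (rule hpow_closed)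
  show "hom_bialgebra_endo (\<lambda>x. x)" "hom_bialgebra_endo alpha"
    by (simp_all add: hom_bialgebra_endo_def alpha_muH deltaH_alpha)
  show "hom_bialgebra_endo alpha_inv"
    by (metis (no_types) hom_bialgebra_endo_def alpha_inv_linear alpha_alpha_inv alpha_uH
        alpha_inv_muH deltaH_alpha_inv epsH_alpha_inv)
  show "hom_bialgebra_endo (\<lambda>x. f (g x))" if "hom_bialgebra_endo f" "hom_bialgebra_endo g" for f g
    using that unfolding hom_bialgebra_endo_def by (auto simp: tmap_tmap linear_comp)
qed

lemma alpha_m_linear [simp]: "is_linear alpha_m"
  and alpha_m_alpha: "alpha_m (alpha x) = alpha (alpha_m x)"
  and alpha_m_muH: "alpha_m (muH (tensor x y)) = muH (tensor (alpha_m x) (alpha_m y))"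
  and deltaH_alpha_m: "deltaH (alpha_m x) = tmap alpha_m alpha_m (deltaH x)"
  and epsH_alpha_m [simp]: "epsH (alpha_m x) = epsH x"
  and alpha_m_uH [simp]: "alpha_m uH = uH"
  using hom_bialgebra_endo_alpha_m by (simp_all add: hom_bialgebra_endo_def)

lemmas linear_comp_maps [simp] =
  linear_comp[OF deltaA_linear] linear_comp[OF deltaH_linear] linear_comp[OF rho_linear]
  linear_comp[OF muH_linear] linear_comp[OF alpha_linear] linear_comp[OF beta_linear]
  linear_comp[OF alpha_inv_linear] linear_comp[OF beta_inv_linear] linear_comp[OF alpha_m_linear]
  linear_comp[OF linear_assocr] linear_comp[OF linear_assocl] linear_comp[OF linear_midswap]
  linear_comp[OF linear_epsr] linear_comp[OF linear_epsl]

lemmas sweedler_push_maps =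
  sweedler_push[OF deltaA_linear] sweedler_push[OF deltaH_linear] sweedler_push[OF rho_linear]
  sweedler_push[OF muH_linear] sweedler_push[OF alpha_linear] sweedler_push[OF beta_linear]
  sweedler_push[OF alpha_inv_linear] sweedler_push[OF beta_inv_linear]
  sweedler_push[OF alpha_m_linear]

lemmas sweedler_normalize =
  sweedler_sweedler tensor_sweedler_left tensor_sweedler_right tmap_sweedler
  assocr_sweedler assocl_sweedler midswap_sweedler sweedler_push_maps
  deltaA_beta deltaA_beta_inv rho_beta rho_beta_inv
  deltaH_alpha deltaH_alpha_inv deltaH_alpha_m deltaH_muH

definition smash_comult_sweedler :: "('a \<Rightarrow>\<^sub>0 'k) \<Rightarrow> ('h \<Rightarrow>\<^sub>0 'k) \<Rightarrow> (('a \<times> 'h) \<times> ('a \<times> 'h) \<Rightarrow>\<^sub>0 'k)" where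
  "smash_comult_sweedler u w =
     sweedler (deltaA u) (\<lambda>a1 a2. sweedler (deltaH w) (\<lambda>h1 h2. sweedler (rho a2) (\<lambda>c a0.
       tensor (tensor a1 (muH (tensor (alpha_m c) (alpha_inv h1)))) (tensor (beta a0) h2))))"

lemma linear_smash_comult [simp]: "is_linear Delta"
  by (simp add: smash_comult_def)

lemma smash_comult_bv: "Delta (bv (x, y)) = smash_comult_sweedler (bv x) (bv y)"
proof -
  define regroup :: "(('a \<times> 'h \<times> 'a) \<times> 'h \<times> 'h \<Rightarrow>\<^sub>0 'k) \<Rightarrow> (('a \<times> 'h \<times> 'h) \<times> 'a \<times> 'h \<Rightarrow>\<^sub>0 'k)"
    where "regroup = lin (\<lambda>((a1, (c, a0)), (h1, h2)). bv ((a1, (c, h1)), (a0, h2)))"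
  define act :: "(('a \<times> 'h \<times> 'h) \<times> 'a \<times> 'h \<Rightarrow>\<^sub>0 'k) \<Rightarrow> (('a \<times> 'h) \<times> 'a \<times> 'h \<Rightarrow>\<^sub>0 'k)"
    where "act = tmap (tmap id (\<lambda>v. muH (tmap alpha_m alpha_inv v))) (tmap beta id)"
  have linear: "is_linear act" "is_linear regroup" by (simp_all add: act_def regroup_def)
  have "Delta (bv (x, y)) = act (regroup (tmap (tmap id rho) id (tensor (deltaA (bv x)) (deltaH (bv y)))))"
    by (simp add: smash_comult_def act_def regroup_def)
  also have "\<dots> = sweedler (deltaA (bv x)) (\<lambda>a b. sweedler (deltaH (bv y)) (\<lambda>c d.
      act (regroup (tmap (tmap id rho) id (tensor (tensor a b) (tensor c d))))))"
    by (subst tensor_eq_sweedler)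
      (simp add: sweedler_push[of act] sweedler_push[of regroup] sweedler_push[of "tmap _ _"] linear)
  also have "\<dots> = smash_comult_sweedler (bv x) (bv y)"
    unfolding smash_comult_sweedler_def
  proof (intro sweedler_cong_bv)
    fix p q :: 'a and p' q' :: 'h
    have "act (regroup (tmap (tmap id rho) id (tensor (tensor (bv p) (bv q)) (tensor (bv p') (bv q')))))
        = act (regroup (tensor (tensor (bv p) (sweedler (rho (bv q)) tensor)) (bv (p', q'))))"
      by simp
    also have "\<dots> = sweedler (rho (bv q)) (\<lambda>c a0. act (regroup (tensor (tensor (bv p) (tensor c a0)) (bv (p', q')))))"
      by (simp only: tensor_sweedler_left tensor_sweedler_right sweedler_push[of act] sweedler_push[of regroup] linear)
    also have "\<dots> = sweedler (rho (bv q)) (\<lambda>c a0.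
        tensor (tensor (bv p) (muH (tensor (alpha_m c) (alpha_inv (bv p'))))) (tensor (beta a0) (bv q')))"
      by (rule sweedler_cong_bv) (simp add: act_def regroup_def)
    finally show "act (regroup (tmap (tmap id rho) id (tensor (tensor (bv p) (bv q)) (tensor (bv p') (bv q')))))
      = sweedler (rho (bv q)) (\<lambda>c a0.
        tensor (tensor (bv p) (muH (tensor (alpha_m c) (alpha_inv (bv p'))))) (tensor (beta a0) (bv q')))" .
  qed
  finally show ?thesis .
qed

lemma smash_comult_tensor [simp]: "Delta (tensor u w) = smash_comult_sweedler u w"
proof -
  have "Delta v = sweedler v smash_comult_sweedler" for v
  proof -
    have "Delta v = lin (\<lambda>p. Delta (bv p)) v" by (rule linear_eq_lin_bv) simp
    also have "\<dots> = sweedler v smash_comult_sweedler"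
      unfolding sweedler_def by (rule lin_cong) (auto simp: smash_comult_bv)
    finally show ?thesis .
  qed
  then show ?thesis by (simp add: smash_comult_sweedler_def)
qed

lemmas deltaA_coassoc_sweedler = hom_coalgebra_coassoc_sweedler[OF A_coalgebra]
lemmas deltaH_coassoc_sweedler = hom_coalgebra_coassoc_sweedler[OF H_coalgebra]
lemmas rho_coassoc_sweedler = hom_comodule_coassoc_sweedler[OF A_comodule deltaH_linear alpha_auto]
lemmas rho_deltaA_sweedler = hom_comodule_coalgebra_sweedler[OF A_comodule_coalgebra muH_linear]

lemma inv_gamma: "inv gamma = tmap beta_inv alpha_inv"
  by (rule inv_tmap[OF beta_auto alpha_auto])

definition coassoc_nf_left ::
    "('a \<Rightarrow>\<^sub>0 'k) \<Rightarrow> ('h \<Rightarrow>\<^sub>0 'k) \<Rightarrow> (('a \<times> 'h) \<times> ('a \<times> 'h) \<times> ('a \<times> 'h) \<Rightarrow>\<^sub>0 'k)" where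
  "coassoc_nf_left u w =
     sweedler (deltaH w) (\<lambda>h1 h2. sweedler (deltaH h1) (\<lambda>k1 k2. sweedler (deltaA u) (\<lambda>x1 x2.
     sweedler (deltaA x1) (\<lambda>e1 e2. sweedler (rho e2) (\<lambda>c1 f1. sweedler (rho x2) (\<lambda>c2 f2.
     sweedler (deltaH c2) (\<lambda>p q.
       tensor (tensor e1 (alpha_inv (muH (tensor (alpha_m (muH (tensor c1 p))) k1))))
         (tensor (tensor (beta f1) (muH (tensor (alpha_m q) (alpha_inv k2)))) (tensor f2 (alpha_inv h2))))))))))"

definition coassoc_nf_right ::
    "('a \<Rightarrow>\<^sub>0 'k) \<Rightarrow> ('h \<Rightarrow>\<^sub>0 'k) \<Rightarrow> (('a \<times> 'h) \<times> ('a \<times> 'h) \<times> ('a \<times> 'h) \<Rightarrow>\<^sub>0 'k)" where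
  "coassoc_nf_right u w =
     sweedler (deltaA u) (\<lambda>y a2. sweedler (deltaH w) (\<lambda>h1 h2. sweedler (rho a2) (\<lambda>c a0.
     sweedler (deltaA y) (\<lambda>y1 y2. sweedler (deltaH h1) (\<lambda>r s. sweedler (deltaH c) (\<lambda>p q.
     sweedler (rho y2) (\<lambda>c1 f1.
       tensor (tensor y1 (muH (tensor (alpha_m c1) (alpha_inv (muH (tensor (alpha_m p) (alpha_inv r)))))))
         (tensor (tensor (beta f1) (muH (tensor (alpha_m q) (alpha_inv s)))) (tensor a0 (alpha_inv h2))))))))))"

lemma coassoc_left_eq_nf: "tmap (inv gamma) Delta (Delta (tensor u w)) = coassoc_nf_left u w"
  unfolding coassoc_nf_left_def
  apply (simp add: inv_gamma smash_comult_sweedler_def sweedler_normalize)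
  apply (simp add: rho_deltaA_sweedler)
  apply (simp only: sweedler_swap[where Y = "deltaH y" for y])
  apply (simp add: rho_coassoc_sweedler sweedler_normalize)
  apply (simp add: deltaA_coassoc_sweedler sweedler_normalize)
  apply (simp add: deltaH_coassoc_sweedler sweedler_normalize)
  done

lemma coassoc_right_eq_nf: "assocr (tmap Delta (inv gamma) (Delta (tensor u w))) = coassoc_nf_right u w"
  unfolding coassoc_nf_right_def
  by (simp add: inv_gamma smash_comult_sweedler_def sweedler_normalize)

lemma muH_reassoc:
  "alpha_inv (muH (tensor (alpha_m (muH (tensor c p))) k))
   = muH (tensor (alpha_m c) (alpha_inv (muH (tensor (alpha_m p) (alpha_inv k)))))"
proof -
  let ?c = "alpha_inv (alpha_m c)" and ?p = "alpha_inv (alpha_m p)" and ?k = "alpha_inv (alpha_inv k)"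
  have "muH (tensor (alpha_m c) (alpha_inv (muH (tensor (alpha_m p) (alpha_inv k)))))
        = muH (tensor (alpha ?c) (muH (tensor ?p ?k)))"
    by (simp add: alpha_inv_muH)
  also have "\<dots> = muH (tensor (muH (tensor ?c ?p)) (alpha ?k))"
    by (rule muH_hom_assoc)
  also have "\<dots> = alpha_inv (muH (tensor (alpha_m (muH (tensor c p))) k))"
    by (simp add: alpha_inv_muH alpha_m_muH)
  finally show ?thesis by simp
qed

lemma coassoc_nf_left_eq_right: "coassoc_nf_left u w = coassoc_nf_right u w"
  unfolding coassoc_nf_left_def coassoc_nf_right_def
  apply (simp only: sweedler_swap[where Y = "deltaH w"])
  apply (rule sweedler_cong)
  subgoal for h1 h2
    apply (simp only: sweedler_swap[where Y = "deltaH h1"])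
    apply (rule sweedler_cong)
    subgoal for k1 k2
      apply (rule sweedler_cong)
      subgoal for x1 x2
        apply (simp only: sweedler_swap[where Y = "deltaA x1"])
        apply (rule sweedler_cong)
        subgoal for e1 e2
          apply (simp only: sweedler_swap[where Y = "rho e2"])
          apply (rule sweedler_cong)+
          apply (simp add: muH_reassoc)
          done
        done
      done
    done
  done

lemma smash_comult_coassoc: "tmap (inv gamma) Delta (Delta c) = assocr (tmap Delta (inv gamma) (Delta c))"
proof -
  have "(\<lambda>c. tmap (inv gamma) Delta (Delta c)) = (\<lambda>c. assocr (tmap Delta (inv gamma) (Delta c)))"
    by (rule linear_eq_on_tensors)
      (simp_all only: linear_comp_maps linear_tmap_comp linear_smash_comult coassoc_left_eq_nf
        coassoc_right_eq_nf coassoc_nf_left_eq_right)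
  then show ?thesis by (rule fun_cong)
qed

lemma smash_comult_gamma: "Delta (gamma c) = tmap gamma gamma (Delta c)"
proof -
  have "(\<lambda>c. Delta (gamma c)) = (\<lambda>c. tmap gamma gamma (Delta c))"
    by (rule linear_eq_on_tensors)
      (simp_all add: linear_comp[OF linear_smash_comult] smash_comult_sweedler_def sweedler_normalize
        alpha_muH alpha_m_alpha)
  then show ?thesis by (rule fun_cong)
qed

lemma smash_counit_right: "epsr eps (Delta c) = inv gamma c"
proof -
  have "epsr eps (Delta (tensor u w)) = tensor (beta_inv u) (alpha_inv w)" for u w
  proof -
    have "epsr eps (Delta (tensor u w))
          = sweedler (deltaA u) (\<lambda>a1 a2. sweedler (deltaH w) (\<lambda>h1 h2. sweedler (rho a2) (\<lambda>c a0.
              pm_scale (epsA a0 * epsH h2) (tensor a1 (muH (tensor (alpha_m c) (alpha_inv h1)))))))"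
      by (simp add: smash_comult_sweedler_def epsr_sweedler sweedler_normalize smash_counit_tensor
          linfun_smash_counit)
    also have "\<dots> = sweedler (deltaA u) (\<lambda>a1 a2. sweedler (deltaH w) (\<lambda>h1 h2.
              pm_scale (epsH h2 * epsA a2) (tensor a1 h1)))"
      by (simp add: sweedler_counit_right_scaled rho_epsA tensor_pm_scale_left tensor_pm_scale_right
          linear_pm_scale[OF muH_linear] linear_pm_scale[OF alpha_m_linear] muH_unit mult.commute)
    also have "\<dots> = sweedler (deltaA u) (\<lambda>a1 a2. pm_scale (epsA a2) (tensor a1 (alpha_inv w)))"
      by (simp add: sweedler_counit_right_scaled deltaH_counit)
    also have "\<dots> = tensor (beta_inv u) (alpha_inv w)"
      by (simp add: sweedler_counit_right deltaA_counit)
    finally show ?thesis .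
  qed
  then have "(\<lambda>c. epsr eps (Delta c)) = inv gamma"
    by (intro linear_eq_on_tensors) (simp_all add: inv_gamma)
  then show ?thesis by (rule fun_cong)
qed

lemma smash_counit_left: "epsl eps (Delta c) = inv gamma c"
proof -
  have "epsl eps (Delta (tensor u w)) = tensor (beta_inv u) (alpha_inv w)" for u w
  proof -
    have "epsl eps (Delta (tensor u w))
          = sweedler (deltaA u) (\<lambda>a1 a2. sweedler (deltaH w) (\<lambda>h1 h2. sweedler (rho a2) (\<lambda>c a0.
              pm_scale (epsH c * (epsA a1 * epsH h1)) (tensor (beta a0) h2))))"
      by (simp add: smash_comult_sweedler_def epsl_sweedler sweedler_normalize smash_counit_tensor
          linfun_smash_counit epsH_muH mult_ac)
    also have "\<dots> = sweedler (deltaA u) (\<lambda>a1 a2. sweedler (deltaH w) (\<lambda>h1 h2.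
              pm_scale (epsH h1 * epsA a1) (tensor a2 h2)))"
      by (simp add: sweedler_counit_left_scaled rho_counit mult.commute)
    also have "\<dots> = sweedler (deltaA u) (\<lambda>a1 a2. pm_scale (epsA a1) (tensor a2 (alpha_inv w)))"
      by (simp add: sweedler_counit_left_scaled deltaH_counit)
    also have "\<dots> = tensor (beta_inv u) (alpha_inv w)"
      by (simp add: sweedler_counit_left deltaA_counit)
    finally show ?thesis .
  qed
  then have "(\<lambda>c. epsl eps (Delta c)) = inv gamma"
    by (intro linear_eq_on_tensors) (simp_all add: inv_gamma)
  then show ?thesis by (rule fun_cong)
qed

lemma smash_hom_coalgebra: "hom_coalgebra Delta eps gamma"
  unfolding hom_coalgebra_def
  by (simp add: linfun_smash_counit lin_auto_tmap beta_auto alpha_auto smash_comult_coassoc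
      smash_comult_gamma smash_counit_right smash_counit_left smash_counit_tmap)

end

theorem proposition3p1:
  fixes muH :: "('h \<times> 'h \<Rightarrow>\<^sub>0 'k::field) \<Rightarrow> ('h \<Rightarrow>\<^sub>0 'k)"
    and uH :: "'h \<Rightarrow>\<^sub>0 'k"
    and deltaH :: "('h \<Rightarrow>\<^sub>0 'k) \<Rightarrow> ('h \<times> 'h \<Rightarrow>\<^sub>0 'k)"
    and epsH :: "('h \<Rightarrow>\<^sub>0 'k) \<Rightarrow> 'k"
    and alpha :: "('h \<Rightarrow>\<^sub>0 'k) \<Rightarrow> ('h \<Rightarrow>\<^sub>0 'k)"
    and deltaA :: "('a \<Rightarrow>\<^sub>0 'k) \<Rightarrow> ('a \<times> 'a \<Rightarrow>\<^sub>0 'k)"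
    and epsA :: "('a \<Rightarrow>\<^sub>0 'k) \<Rightarrow> 'k"
    and beta :: "('a \<Rightarrow>\<^sub>0 'k) \<Rightarrow> ('a \<Rightarrow>\<^sub>0 'k)"
    and rho :: "('a \<Rightarrow>\<^sub>0 'k) \<Rightarrow> ('h \<times> 'a \<Rightarrow>\<^sub>0 'k)"
    and m :: int
  assumes "hom_bialgebra muH uH deltaH epsH alpha"
    and "hom_comodule_coalgebra muH uH deltaH epsH alpha deltaA epsA beta rho"
  shows "hom_coalgebra (smash_comult muH deltaH alpha deltaA beta rho m)
           (smash_counit epsH epsA) (tmap beta alpha)"
proof -
  interpret smash_coproduct muH uH deltaH epsH alpha deltaA epsA beta rho m
    using assms by unfold_locales
  show ?thesis by (rule smash_hom_coalgebra)
qed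

end
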